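(* Let $\kappa$ be an infinite cardinal. The set $B=\{(A,\,A\cap C,\,C) : A,C\in\mathcal{F}(\kappa),\ A\sim C\}$ is a maximal Boolean sublattice of the lattice $S$; that is, $B$ is a bounded Boolean sublattice of $S$ and no complemented bounded sublattice $C$ of $S$ with $B\subsetneq C$ is Boolean.
   Context: $\mathcal{F}(\kappa)$ is the Boolean lattice of subsets $X\subseteq\kappa$ that are finite or cofinite (i.e. $\kappa\setminus X$ finite). For $A,C\in\mathcal{F}(\kappa)$, write $A\sim C$ if either both $A$ and $C$ are finite or both $\kappa\setminus A$ and $\kappa\setminus C$ are finite. For $(A,B,C)$ set $\mu(A,B,C)=(A\cap B)\cup(A\cap C)\cup(B\cap C)$. A triple $(A,B,C)$ is balanced if $A\cap B=A\cap C=B\cap C$. The lattice $S$ is the set of balanced triples $(A,B,C)\in\mathcal{F}(\kappa)^3$ such that $C\setminus\mu(A,B,C)$ is finite, ordered componentwise; its meet is componentwise intersection and its join is $(A,B,C)\vee(A',B',C')=(U_1\cup m,U_2\cup m,U_3\cup m)$ where $(U_1,U_2,U_3)=(A\cup A',B\cup B',C\cup C')$ and $m=\mu(U_1,U_2,U_3)$. Its bounds are $(\emptyset,\emptyset,\emptyset)$ and $(\kappa,\kappa,\kappa)$. *)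

theory Defs
  imports Main
begin

text \<open>The infinite cardinal kappa is modelled by the universe of an infinite type 'a;
  subsets of kappa are sets of type 'a set.  Triples are 'a set \<times> 'a set \<times> 'a set.\<close>

type_synonym 'a triple = "'a set \<times> 'a set \<times> 'a set"

definition fincof :: "'a set \<Rightarrow> bool" where
  "fincof X \<longleftrightarrow> finite X \<or> finite (- X)"

definition simF :: "'a set \<Rightarrow> 'a set \<Rightarrow> bool" where
  "simF A C \<longleftrightarrow> (finite A \<and> finite C) \<or> (finite (- A) \<and> finite (- C))"

definition mu :: "'a set \<Rightarrow> 'a set \<Rightarrow> 'a set \<Rightarrow> 'a set" where
  "mu A B C = (A \<inter> B) \<union> (A \<inter> C) \<union> (B \<inter> C)"

definition balanced :: "'a triple \<Rightarrow> bool" where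
  "balanced t \<longleftrightarrow> (case t of (A, B, C) \<Rightarrow> A \<inter> B = A \<inter> C \<and> A \<inter> C = B \<inter> C)"

definition S :: "'a triple set" where
  "S = {(A, B, C). fincof A \<and> fincof B \<and> fincof C \<and> balanced (A, B, C)
                   \<and> finite (C - mu A B C)}"

definition meetS :: "'a triple \<Rightarrow> 'a triple \<Rightarrow> 'a triple" where
  "meetS x y = (case x of (A, B, C) \<Rightarrow> case y of (A', B', C') \<Rightarrow>
                 (A \<inter> A', B \<inter> B', C \<inter> C'))"

definition joinS :: "'a triple \<Rightarrow> 'a triple \<Rightarrow> 'a triple" where
  "joinS x y = (case x of (A, B, C) \<Rightarrow> case y of (A', B', C') \<Rightarrow>
                 (let U1 = A \<union> A'; U2 = B \<union> B'; U3 = C \<union> C'; m = mu U1 U2 U3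
                  in (U1 \<union> m, U2 \<union> m, U3 \<union> m)))"

definition botS :: "'a triple" where
  "botS = ({}, {}, {})"

definition topS :: "'a triple" where
  "topS = (UNIV, UNIV, UNIV)"

definition bounded_sublattice :: "'a triple set \<Rightarrow> bool" where
  "bounded_sublattice T \<longleftrightarrow> T \<subseteq> S \<and> botS \<in> T \<and> topS \<in> T \<and>
     (\<forall>x\<in>T. \<forall>y\<in>T. meetS x y \<in> T \<and> joinS x y \<in> T)"

definition complemented_sub :: "'a triple set \<Rightarrow> bool" where
  "complemented_sub T \<longleftrightarrow> (\<forall>x\<in>T. \<exists>y\<in>T. meetS x y = botS \<and> joinS x y = topS)"

definition distributive_sub :: "'a triple set \<Rightarrow> bool" where
  "distributive_sub T \<longleftrightarrow>
     (\<forall>x\<in>T. \<forall>y\<in>T. \<forall>z\<in>T. meetS x (joinS y z) = joinS (meetS x y) (meetS x z))"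

definition boolean_sublattice :: "'a triple set \<Rightarrow> bool" where
  "boolean_sublattice T \<longleftrightarrow> bounded_sublattice T \<and> complemented_sub T \<and> distributive_sub T"

definition Bset :: "'a triple set" where
  "Bset = {(A, A \<inter> C, C) | A C. fincof A \<and> fincof C \<and> simF A C}"

end

theory Submission
  imports Defs
begin

text \<open>On B every operation of S is componentwise (the middle component stays A \<inter> C), so B is a
  Boolean algebra.  Conversely, distributivity against the atoms ({p}, {}, {}) and ({}, {}, {p})
  forces every element of a distributive extension of B to have the form (A, A \<inter> D, D).  Such an
  element outside B has A cofinite and D finite; its complement (Y, Y \<inter> Z, Z) then has Y
  disjoint from A and Z - Y finite, so Z is finite, and the third component of their join is
  finite, hence not \<kappa>.\<close>

lemma mem_Bset_iff: "(A, B, C) \<in> Bset \<longleftrightarrow> B = A \<inter> C \<and> fincof A \<and> fincof C \<and> simF A C"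
  unfolding Bset_def by auto

lemma joinS_Int_middle:
  "joinS (A, A \<inter> C, C) (A', A' \<inter> C', C') = (A \<union> A', (A \<union> A') \<inter> (C \<union> C'), C \<union> C')"
  unfolding joinS_def mu_def Let_def by auto

lemma meetS_Int_middle:
  "meetS (A, A \<inter> C, C) (A', A' \<inter> C', C') = (A \<inter> A', (A \<inter> A') \<inter> (C \<inter> C'), C \<inter> C')"
  unfolding meetS_def by auto

lemma mu_Int_middle: "mu A (A \<inter> C) C = A \<inter> C"
  unfolding mu_def by auto

lemma fincof_Un: "fincof A \<Longrightarrow> fincof B \<Longrightarrow> fincof (A \<union> B)"
  unfolding fincof_def by (auto intro: finite_subset)

lemma fincof_Int: "fincof A \<Longrightarrow> fincof B \<Longrightarrow> fincof (A \<inter> B)"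
  unfolding fincof_def by (auto intro: finite_subset)

lemma fincof_Compl: "fincof A \<Longrightarrow> fincof (- A)"
  unfolding fincof_def by auto

lemma simF_Un: "simF A C \<Longrightarrow> simF A' C' \<Longrightarrow> simF (A \<union> A') (C \<union> C')"
  unfolding simF_def by (auto intro: finite_subset)

lemma simF_Int:
  "simF A C \<Longrightarrow> simF A' C' \<Longrightarrow> fincof A \<Longrightarrow> fincof A' \<Longrightarrow> fincof C \<Longrightarrow> fincof C'
    \<Longrightarrow> simF (A \<inter> A') (C \<inter> C')"
  unfolding simF_def fincof_def by (auto intro: finite_subset)

lemma simF_Compl: "simF A C \<Longrightarrow> simF (- A) (- C)"
  unfolding simF_def by auto

lemma finite_Diff_if_simF: "simF A C \<Longrightarrow> finite (C - A)"
  unfolding simF_def by (auto intro: finite_subset)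

lemma Int_middle_in_S_iff:
  "(A, A \<inter> C, C) \<in> S \<longleftrightarrow> fincof A \<and> fincof C \<and> finite (C - A)"
proof -
  have "C - mu A (A \<inter> C) C = C - A" unfolding mu_Int_middle by auto
  then show ?thesis unfolding S_def balanced_def by (auto intro: fincof_Int)
qed

lemma Bset_subset_S: "Bset \<subseteq> S"
  unfolding Bset_def by (auto simp: Int_middle_in_S_iff finite_Diff_if_simF)

lemma bounded_sublattice_Bset: "bounded_sublattice Bset"
  unfolding bounded_sublattice_def
proof (intro conjI ballI Bset_subset_S)
  show "botS \<in> Bset" "topS \<in> Bset"
    unfolding botS_def topS_def mem_Bset_iff fincof_def simF_def by auto
  fix x y :: "'a triple" assume "x \<in> Bset" "y \<in> Bset"
  then show "meetS x y \<in> Bset" "joinS x y \<in> Bset"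
    unfolding Bset_def
    by (auto simp: meetS_Int_middle joinS_Int_middle mem_Bset_iff
        intro: fincof_Un fincof_Int simF_Un simF_Int)
qed

lemma complemented_sub_Bset: "complemented_sub Bset"
  unfolding complemented_sub_def
proof
  fix x :: "'a triple" assume "x \<in> Bset"
  then obtain A C where x: "x = (A, A \<inter> C, C)" "fincof A" "fincof C" "simF A C"
    unfolding Bset_def by blast
  have "(- A, - A \<inter> - C, - C) \<in> Bset"
    unfolding mem_Bset_iff using x by (auto intro: fincof_Compl simF_Compl)
  moreover have "meetS x (- A, - A \<inter> - C, - C) = botS"
    unfolding x meetS_Int_middle botS_def by auto
  moreover have "joinS x (- A, - A \<inter> - C, - C) = topS"
    unfolding x joinS_Int_middle topS_def by auto
  ultimately show "\<exists>y\<in>Bset. meetS x y = botS \<and> joinS x y = topS" by blast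
qed

lemma distributive_sub_Bset: "distributive_sub Bset"
  unfolding distributive_sub_def Bset_def
  by (auto simp: meetS_Int_middle joinS_Int_middle)

lemma boolean_sublattice_Bset: "boolean_sublattice Bset"
  unfolding boolean_sublattice_def
  using bounded_sublattice_Bset complemented_sub_Bset distributive_sub_Bset by blast

lemma distributive_sub_middle_eq_Int:
  assumes dist: "distributive_sub T" and sub: "Bset \<subseteq> T"
    and xT: "(A, B, D) \<in> T" and bal: "balanced (A, B, D)"
  shows "B = A \<inter> D"
proof (rule ccontr)
  assume "B \<noteq> A \<inter> D"
  with bal obtain p where p: "p \<in> B" "p \<notin> A" "p \<notin> D"
    unfolding balanced_def by auto
  have "({p}, {}, {}) \<in> T" "({}, {}, {p}) \<in> T"
    using sub unfolding Bset_def fincof_def simF_def by force+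
  then have "meetS ({p}, {}, {}) (joinS (A, B, D) ({}, {}, {p}))
      = joinS (meetS ({p}, {}, {}) (A, B, D)) (meetS ({p}, {}, {}) ({}, {}, {p}))"
    using dist xT unfolding distributive_sub_def by blast
  moreover have "p \<in> fst (meetS ({p}, {}, {}) (joinS (A, B, D) ({}, {}, {p})))"
    using p unfolding meetS_def joinS_def mu_def Let_def by auto
  moreover have "fst (joinS (meetS ({p}, {}, {}) (A, B, D)) (meetS ({p}, {}, {}) ({}, {}, {p}))) = {}"
    using p unfolding meetS_def joinS_def mu_def Let_def by auto
  ultimately show False by simp
qed

lemma not_simF_in_S_cofinite_finite:
  assumes inf: "infinite (UNIV :: 'a set)"
    and xS: "(A, A \<inter> D, D) \<in> S" and nsim: "\<not> simF A (D :: 'a set)"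
  shows "finite (- A) \<and> finite D"
proof -
  have fA: "fincof A" and fD: "fincof D" and finDA: "finite (D - A)"
    using xS by (auto simp: Int_middle_in_S_iff)
  have "\<not> (finite A \<and> finite (- D))"
  proof
    assume "finite A \<and> finite (- D)"
    then have "finite ((- D \<union> A) \<union> (D - A))" using finDA by simp
    moreover have "(- D \<union> A) \<union> (D - A) = UNIV" by auto
    ultimately show False using inf by simp
  qed
  then show ?thesis using nsim fA fD unfolding simF_def fincof_def by auto
qed

lemma finite_if_disjoint_from_cofinite:
  assumes "(Y, Y \<inter> Z, Z) \<in> S" and "finite (- A)" and "A \<inter> Y = {}"
  shows "finite Y \<and> finite Z"
proof -
  have "Y \<subseteq> - A" using assms(3) by blast
  then have finY: "finite Y" using assms(2) by (rule finite_subset)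
  moreover have "finite (Z - Y)" using assms(1) by (simp add: Int_middle_in_S_iff)
  ultimately have "finite (Y \<union> (Z - Y))" by simp
  then have "finite Z" by (rule finite_subset[rotated]) blast
  with finY show ?thesis ..
qed

lemma joinS_third_subset: "snd (snd (joinS (A, B, C) (A', B', C'))) \<subseteq> B \<union> B' \<union> C \<union> C'"
  unfolding joinS_def mu_def Let_def by auto

lemma not_boolean_proper_extension_Bset:
  assumes inf: "infinite (UNIV :: 'a set)"
    and T: "bounded_sublattice T" "complemented_sub T" "Bset \<subset> (T :: 'a triple set)"
  shows "\<not> boolean_sublattice T"
proof
  assume "boolean_sublattice T"
  then have dist: "distributive_sub T" unfolding boolean_sublattice_def by blast
  have TS: "T \<subseteq> S" using T(1) unfolding bounded_sublattice_def by blast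
  have BT: "Bset \<subseteq> T" using T(3) by (rule psubset_imp_subset)
  have middle: "B = A \<inter> D" if xT: "(A, B, D) \<in> T" for A B D
  proof -
    have "(A, B, D) \<in> S" using xT TS by blast
    then have "balanced (A, B, D)" unfolding S_def by simp
    then show ?thesis by (rule distributive_sub_middle_eq_Int[OF dist BT xT])
  qed
  obtain x where "x \<in> T" "x \<notin> Bset" using T(3) by blast
  moreover obtain A B D where "x = (A, B, D)" by (cases x)
  ultimately have xT: "(A, A \<inter> D, D) \<in> T" and xnB: "(A, A \<inter> D, D) \<notin> Bset"
    using middle by auto
  have xS: "(A, A \<inter> D, D) \<in> S" using xT TS by blast
  then have "\<not> simF A D" using xnB by (auto simp: mem_Bset_iff Int_middle_in_S_iff)
  then have cofA: "finite (- A)" and finD: "finite D"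
    using not_simF_in_S_cofinite_finite[OF inf xS] by auto
  obtain Y Y' Z where yT: "(Y, Y', Z) \<in> T"
    and meet: "meetS (A, A \<inter> D, D) (Y, Y', Z) = botS"
    and join: "joinS (A, A \<inter> D, D) (Y, Y', Z) = topS"
    using T(2) xT unfolding complemented_sub_def by (metis prod_cases3)
  have Y': "Y' = Y \<inter> Z" using yT by (rule middle)
  have "A \<inter> Y = {}" using meet unfolding meetS_def botS_def by auto
  moreover have "(Y, Y \<inter> Z, Z) \<in> S" using yT TS Y' by blast
  ultimately have "finite Y \<and> finite Z"
    using finite_if_disjoint_from_cofinite cofA by blast
  then have "finite (A \<inter> D \<union> Y' \<union> D \<union> Z)" using finD Y' by simp
  then have "finite (snd (snd (joinS (A, A \<inter> D, D) (Y, Y', Z))))"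
    using joinS_third_subset by (rule finite_subset[rotated])
  then show False using join inf unfolding topS_def by simp
qed

theorem proposition5p6:
  assumes "infinite (UNIV :: 'a set)"
  shows "boolean_sublattice (Bset :: 'a triple set) \<and>
         (\<forall>C :: 'a triple set. bounded_sublattice C \<and> complemented_sub C \<and> Bset \<subset> C
              \<longrightarrow> \<not> boolean_sublattice C)"
  using boolean_sublattice_Bset not_boolean_proper_extension_Bset[OF assms] by blast

end
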